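(* The inclusion $\mathrm{CDUS}(\Pi)\subseteq\mathrm{PF}(\Pi)$ does not hold in general: there exists a (finite) family of policies $\Pi$ such that $\mathrm{CDUS}(\Pi)\not\subseteq\mathrm{PF}(\Pi)$.
   Context: A family of policies $\Pi=\{\pi_1,\pi_2,\dots\}$ of a multi-objective decision problem with $d$ objectives is given, each $\pi$ having a random return vector $\mathbf{Z}^\pi\in\mathbb{R}^d$ with finite mean $\mathbf{V}^\pi=\mathbb{E}[\mathbf{Z}^\pi]$; the return distributions of the policies may be arbitrary (e.g. finitely supported). For $\mathbf{x},\mathbf{y}\in\mathbb{R}^d$: $\mathbf{y}\preceq_p\mathbf{x}$ iff $y_i\le x_i$ for all $i$; $\mathbf{x}\succ_p\mathbf{y}$ iff $x_i\ge y_i$ for all $i$ and $x_i>y_i$ for some $i$. CDF: $F_{\mathbf{X}}(\mathbf{x})=P(\mathbf{X}\preceq_p\mathbf{x})$; $\mathbf{X}\succeq_{\mathrm{FSD}}\mathbf{Y}$ iff $F_{\mathbf{X}}\le F_{\mathbf{Y}}$ pointwise, $\succ_{\mathrm{FSD}}$ additionally requiring strict inequality somewhere; $\mathbf{X}\succ_d\mathbf{Y}$ iff $\mathbf{X}\succeq_{\mathrm{FSD}}\mathbf{Y}$ and $X_j\succ_{\mathrm{FSD}}Y_j$ for some marginal $j$. For weights $\lambda\in\Delta^{|\Pi|}$ (probability vectors), $\sum_i\lambda_i\mathbf{Z}^{\pi_i}$ is the mixture distribution with CDF $\sum_i\lambda_iF_{\mathbf{Z}^{\pi_i}}$. $\mathrm{PF}(\Pi)=\{\pi\in\Pi:\nexists\pi'\in\Pi,\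 \mathbf{V}^{\pi'}\succ_p\mathbf{V}^\pi\}$; $\mathrm{CDUS}(\Pi)=\{\pi\in\Pi:\nexists\lambda\in\Delta^{|\Pi|},\ \sum_i\lambda_i\mathbf{Z}^{\pi_i}\succ_d\mathbf{Z}^\pi\}$. *)

theory Defs
  imports "HOL-Probability.Probability"
begin

text \<open>Return vectors in R^d are represented as functions nat => real, of which only the
coordinates i < d are relevant. A policy family Pi = {pi_0, ..., pi_(n-1)} is given by
n return distributions Z 0, ..., Z (n-1), each a discrete probability distribution (pmf).\<close>

definition pareto_le :: "nat \<Rightarrow> (nat \<Rightarrow> real) \<Rightarrow> (nat \<Rightarrow> real) \<Rightarrow> bool" where
  "pareto_le d y x \<longleftrightarrow> (\<forall>i<d. y i \<le> x i)"

definition pareto_gt :: "nat \<Rightarrow> (nat \<Rightarrow> real) \<Rightarrow> (nat \<Rightarrow> real) \<Rightarrow> bool" where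
  "pareto_gt d x y \<longleftrightarrow> (\<forall>i<d. x i \<ge> y i) \<and> (\<exists>i<d. x i > y i)"

definition mcdf :: "nat \<Rightarrow> (nat \<Rightarrow> real) pmf \<Rightarrow> (nat \<Rightarrow> real) \<Rightarrow> real" where
  "mcdf d p x = measure_pmf.prob p {z. pareto_le d z x}"

definition marg_cdf :: "(nat \<Rightarrow> real) pmf \<Rightarrow> nat \<Rightarrow> real \<Rightarrow> real" where
  "marg_cdf p j t = measure_pmf.prob p {z. z j \<le> t}"

definition mean_vec :: "(nat \<Rightarrow> real) pmf \<Rightarrow> (nat \<Rightarrow> real)" where
  "mean_vec p = (\<lambda>i. measure_pmf.expectation p (\<lambda>z. z i))"

text \<open>First-order stochastic dominance, phrased on CDFs: X \<succeq>_FSD Y iff F_X \<le> F_Y.\<close>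
definition fsd_ge :: "('a \<Rightarrow> real) \<Rightarrow> ('a \<Rightarrow> real) \<Rightarrow> bool" where
  "fsd_ge FX FY \<longleftrightarrow> (\<forall>x. FX x \<le> FY x)"

definition fsd_gt :: "('a \<Rightarrow> real) \<Rightarrow> ('a \<Rightarrow> real) \<Rightarrow> bool" where
  "fsd_gt FX FY \<longleftrightarrow> fsd_ge FX FY \<and> (\<exists>x. FX x < FY x)"

definition dist_dom :: "nat \<Rightarrow> ((nat \<Rightarrow> real) \<Rightarrow> real) \<Rightarrow> (nat \<Rightarrow> real \<Rightarrow> real)
    \<Rightarrow> ((nat \<Rightarrow> real) \<Rightarrow> real) \<Rightarrow> (nat \<Rightarrow> real \<Rightarrow> real) \<Rightarrow> bool" where
  "dist_dom d FX MX FY MY \<longleftrightarrow> fsd_ge FX FY \<and> (\<exists>j<d. fsd_gt (MX j) (MY j))"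

definition prob_simplex :: "nat \<Rightarrow> (nat \<Rightarrow> real) set" where
  "prob_simplex n = {lam. (\<forall>i<n. 0 \<le> lam i) \<and> (\<Sum>i<n. lam i) = 1}"

text \<open>Mixture sum_i lam_i Z^(pi_i): its joint CDF and marginal CDFs are the lam-weighted sums.\<close>
definition mix_cdf :: "nat \<Rightarrow> nat \<Rightarrow> (nat \<Rightarrow> (nat \<Rightarrow> real) pmf) \<Rightarrow> (nat \<Rightarrow> real)
    \<Rightarrow> (nat \<Rightarrow> real) \<Rightarrow> real" where
  "mix_cdf d n Z lam x = (\<Sum>i<n. lam i * mcdf d (Z i) x)"

definition mix_marg :: "nat \<Rightarrow> (nat \<Rightarrow> (nat \<Rightarrow> real) pmf) \<Rightarrow> (nat \<Rightarrow> real)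
    \<Rightarrow> nat \<Rightarrow> real \<Rightarrow> real" where
  "mix_marg n Z lam j t = (\<Sum>i<n. lam i * marg_cdf (Z i) j t)"

definition PF :: "nat \<Rightarrow> nat \<Rightarrow> (nat \<Rightarrow> (nat \<Rightarrow> real) pmf) \<Rightarrow> nat set" where
  "PF d n Z = {k. k < n \<and> \<not> (\<exists>k'<n. pareto_gt d (mean_vec (Z k')) (mean_vec (Z k)))}"

definition CDUS :: "nat \<Rightarrow> nat \<Rightarrow> (nat \<Rightarrow> (nat \<Rightarrow> real) pmf) \<Rightarrow> nat set" where
  "CDUS d n Z = {k. k < n \<and> \<not> (\<exists>lam\<in>prob_simplex n.
       dist_dom d (mix_cdf d n Z lam) (mix_marg n Z lam) (mcdf d (Z k)) (marg_cdf (Z k)))}"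

end

theory Submission
  imports Defs
begin

text \<open>Take one objective and two policies: \<open>\<pi>\<^sub>0\<close> returns 1 surely, \<open>\<pi>\<^sub>1\<close> returns 0 or 10
with probability 1/2 each. Then \<open>\<pi>\<^sub>1\<close> has the larger mean, so \<open>\<pi>\<^sub>0\<close> is not Pareto optimal.
But the CDF of \<open>\<pi>\<^sub>1\<close> at 0 is 1/2 while that of \<open>\<pi>\<^sub>0\<close> is 0, so a mixture whose CDF lies below
that of \<open>\<pi>\<^sub>0\<close> must put all its weight on \<open>\<pi>\<^sub>0\<close>, and then it cannot dominate \<open>\<pi>\<^sub>0\<close> strictly.\<close>

lemma mix_weight_eq_0_if_cdf_le_0:
  assumes lam: "lam \<in> prob_simplex n"
    and mix_le: "mix_cdf d n Z lam x \<le> 0"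
    and "i < n" and pos: "mcdf d (Z i) x > 0"
  shows "lam i = 0"
proof -
  have nonneg: "0 \<le> lam j * mcdf d (Z j) x" if "j \<in> {..<n}" for j
    using lam that by (simp add: prob_simplex_def mcdf_def)
  then have "0 \<le> (\<Sum>j<n. lam j * mcdf d (Z j) x)"
    by (rule sum_nonneg)
  then have "(\<Sum>j<n. lam j * mcdf d (Z j) x) = 0"
    using mix_le by (simp add: mix_cdf_def)
  then have "lam i * mcdf d (Z i) x = 0"
    using sum_nonneg_eq_0_iff[of "{..<n}" "\<lambda>j. lam j * mcdf d (Z j) x"] nonneg \<open>i < n\<close>
    by simp
  then show ?thesis
    using pos by simp
qed

lemma mix_marg_concentrated:
  assumes lam: "lam \<in> prob_simplex n" and "k < n"
    and others: "\<And>i. i < n \<Longrightarrow> i \<noteq> k \<Longrightarrow> lam i = 0"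
  shows "mix_marg n Z lam = marg_cdf (Z k)"
proof -
  have sum_eq: "(\<Sum>i<n. lam i * f i) = lam k * f k" for f :: "nat \<Rightarrow> real"
    using \<open>k < n\<close> others by (simp add: sum.remove[of _ k] sum.neutral)
  have "lam k = 1"
    using lam sum_eq[of "\<lambda>_. 1"] by (simp add: prob_simplex_def)
  then show ?thesis
    by (simp add: mix_marg_def sum_eq fun_eq_iff)
qed

lemma in_CDUS_if_cdf_vanishes:
  assumes "k < n" and zero: "mcdf d (Z k) x = 0"
    and pos: "\<And>i. i < n \<Longrightarrow> i \<noteq> k \<Longrightarrow> mcdf d (Z i) x > 0"
  shows "k \<in> CDUS d n Z"
proof -
  have "\<not> dist_dom d (mix_cdf d n Z lam) (mix_marg n Z lam) (mcdf d (Z k)) (marg_cdf (Z k))"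
    if lam: "lam \<in> prob_simplex n" for lam
  proof
    assume dom: "dist_dom d (mix_cdf d n Z lam) (mix_marg n Z lam) (mcdf d (Z k)) (marg_cdf (Z k))"
    then have "mix_cdf d n Z lam x \<le> 0"
      using zero by (metis dist_dom_def fsd_ge_def)
    then have "mix_marg n Z lam = marg_cdf (Z k)"
      using lam pos \<open>k < n\<close> by (intro mix_marg_concentrated mix_weight_eq_0_if_cdf_le_0)
    with dom show False
      by (simp add: dist_dom_def fsd_gt_def)
  qed
  then show ?thesis
    using \<open>k < n\<close> by (simp add: CDUS_def)
qed

definition sure_vs_coin :: "nat \<Rightarrow> (nat \<Rightarrow> real) pmf" where
  "sure_vs_coin k =
     (if k = 0 then return_pmf (\<lambda>_. 1) else pmf_of_set {(\<lambda>_. 0), (\<lambda>_. 10)})"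

lemma const_0_neq_const_10: "(\<lambda>_::nat. 0::real) \<noteq> (\<lambda>_. 10)"
  by (metis zero_neq_numeral)

lemma mean_sure_vs_coin:
  "mean_vec (sure_vs_coin 0) 0 = 1" "mean_vec (sure_vs_coin 1) 0 = 5"
  using const_0_neq_const_10
  by (simp_all add: mean_vec_def sure_vs_coin_def integral_pmf_of_set)

lemma mcdf_sure_vs_coin_at_0:
  "mcdf 1 (sure_vs_coin 0) (\<lambda>_. 0) = 0" "mcdf 1 (sure_vs_coin 1) (\<lambda>_. 0) = 1/2"
proof -
  have "{(\<lambda>_::nat. 0::real), (\<lambda>_. 10)} \<inter> {z. pareto_le 1 z (\<lambda>_. 0)} = {(\<lambda>_. 0)}"
    by (auto simp: pareto_le_def)
  then show "mcdf 1 (sure_vs_coin 1) (\<lambda>_. 0) = 1/2"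
    using const_0_neq_const_10 by (simp add: mcdf_def sure_vs_coin_def measure_pmf_of_set)
qed (simp add: mcdf_def sure_vs_coin_def pareto_le_def)

theorem mainTheorem14:
  shows "\<exists>(d::nat) (n::nat) (Z :: nat \<Rightarrow> (nat \<Rightarrow> real) pmf).
           d \<ge> 1 \<and> (\<forall>k<n. finite (set_pmf (Z k))) \<and> \<not> (CDUS d n Z \<subseteq> PF d n Z)"
proof -
  have finite: "\<forall>k<2. finite (set_pmf (sure_vs_coin k))"
    using const_0_neq_const_10 by (auto simp: sure_vs_coin_def)
  have "0 \<notin> PF 1 2 sure_vs_coin"
    using mean_sure_vs_coin by (auto simp: PF_def pareto_gt_def intro!: exI[of _ 1])
  moreover have "0 \<in> CDUS 1 2 sure_vs_coin"
    using mcdf_sure_vs_coin_at_0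
    by (intro in_CDUS_if_cdf_vanishes[where x = "\<lambda>_. 0"]) (auto simp: less_2_cases_iff)
  ultimately show ?thesis
    using finite by (intro exI[of _ 1] exI[of _ 2] exI[of _ sure_vs_coin]) blast
qed

end
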